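(* Consider the setting and algorithm described in the context and assume (A1), (A2), (A3). Given a time horizon $K>0$, a node $i_0\in\{1,\dots,N\}$ and a privacy level $\epsilon_{i_0}>0$, the algorithm run for $K$ iterations preserves $\epsilon_{i_0}$-differential privacy for node $i_0$'s objective function if $$\sum_{k=1}^K\sqrt d\Big(\frac1{\alpha u_{e,i_0}}+\frac1{u_{w,i_0}}\Big)\frac{\alpha\delta}{r_{i_0}^k(1-\alpha\bar M)}\le\epsilon_{i_0}.$$
   Context: Problem. Let $\mathcal G=(\mathcal V,\mathcal E)$ be a connected undirected graph with $\mathcal V=\{1,\dots,N\}$. Each node $i$ holds a differentiable $f_i:\mathbb R^d\to\mathbb R$. (A1) Each $\nabla f_i$ is $M_i$-Lipschitz; $\bar M=\max_iM_i$. (A2) $f=\sum_if_i$ satisfies $\inf f>-\infty$. $\tilde f(\mathbf x)=\sum_if_i(x_i)$ for $\mathbf x=(x_1^{\mathsf T},\dots,x_N^{\mathsf T})^{\mathsf T}$. $\mathbf P\in\mathbb R^{N\times N}$ symmetric positive semidefinite with $p_{ij}=0$ if $i\ne j$, $\{i,j\}\notin\mathcal E$; $\mathbf L=\mathbf P\otimes\mathbf I_d$. (A3) $\mathrm{Null}(\mathbf L)=\{\mathbf x:x_1=\dots=x_N\}$. Algorithm. Parameters $\rho,\alpha,\beta>0$, a predetermined sequence $\eta^k\in(0,1)$, decay rates $r_i\in(0,1)$, scales $u_{e,i},u_{w,i}>0$. $\mathbf x^0$ arbitrary, $\mathbf d^0=\mathbf q^0=\mathbf 0$. At each $k$, independent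 noises $w_i^k,e_i^k\in\mathbb R^d$ with independent Laplace coordinates (density $\frac1{2\theta}e^{-|x|/\theta}$) of scales $r_i^ku_{w,i}$ and $r_i^ku_{e,i}$, stacked into $\mathbf w^k,\mathbf e^k$. Updates: $\mathbf y^k=\mathbf x^k+(1-\eta^k)\mathbf d^k+\mathbf w^k$, $\mathbf z^k=\nabla\tilde f(\mathbf x^k)+\eta^k\mathbf q^k+\rho\mathbf L\mathbf y^k+\mathbf e^k$, $\mathbf x^{k+1}=\mathbf x^k+\mathbf w^k-\alpha(\mathbf z^k-\mathbf e^k)+\beta\mathbf L\mathbf z^k$, $\mathbf d^{k+1}=\eta^k\mathbf d^k+\mathbf y^k$, $\mathbf q^{k+1}=\eta^k\mathbf q^k+\rho\mathbf L\mathbf y^k$. The observation available to an eavesdropper is $\mathcal O=\{\mathbf y^k,\mathbf z^k\}_{k}$ (the transmitted quantities). $\delta$-adjacency: for $\delta>0$, two function sets $F^{(1)}=\{f_i^{(1)}\}_{i=1}^N$, $F^{(2)}=\{f_i^{(2)}\}_{i=1}^N$ (each satisfying the assumptions above) are $\delta$-adjacent if there is $i_0$ with $f_i^{(1)}=f_i^{(2)}$ for $i\ne i_0$ and $\sup_{x\in\mathbb R^d}\|\nabla f_{i_0}^{(1)}(x)-\nabla f_{i_0}^{(2)}(x)\|\le\delta$. $\epsilon$-differential privacy (for node $i_0$'s objective): for any $\delta$-adjacent $F^{(1)},F^{(2)}$ (differing at $i_0$) and any observation $\mathcal O$, $\mathbb P(F^{(1)}|\mathcal O)\le e^{\epsilon}\mathbb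 P(F^{(2)}|\mathcal O)$, where $\mathbb P(F^{(h)}|\mathcal O)$ is the probability of inferring $F^{(h)}$ from $\mathcal O$; concretely, with initialization, network and $\{\eta^k\}$ fixed, the observation is determined by the noise sequences, and $\mathbb P(F^{(h)}|\mathcal O)$ is the probability (density) of the noise sequences that produce $\mathcal O$ when the algorithm runs on $F^{(h)}$. *)

theory Defs
  imports "HOL-Analysis.Analysis"
begin

text \<open>Nodes are indexed by a finite type 'n (N = CARD('n)), the local dimension by a
finite type 'd (d = CARD('d)).  A stacked vector is of type real^'d^'n, with block x$i.\<close>

definition connected_undirected_graph :: "('n::finite \<times> 'n) set \<Rightarrow> bool" where
  "connected_undirected_graph Eg \<longleftrightarrow> sym Eg \<and> (\<forall>i j. (i, j) \<in> Eg\<^sup>*)"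

definition graph_compatible_psd :: "('n::finite \<times> 'n) set \<Rightarrow> real^'n^'n \<Rightarrow> bool" where
  "graph_compatible_psd Eg P \<longleftrightarrow>
     (\<forall>i j. P$i$j = P$j$i) \<and>
     (\<forall>v::real^'n. (\<Sum>i\<in>UNIV. \<Sum>j\<in>UNIV. v$i * P$i$j * v$j) \<ge> 0) \<and>
     (\<forall>i j. i \<noteq> j \<and> (i, j) \<notin> Eg \<longrightarrow> P$i$j = 0)"

text \<open>L = P \<otimes> I_d acting on stacked vectors.\<close>
definition Lop :: "real^'n^'n \<Rightarrow> real^'d^'n \<Rightarrow> real^'d^'n" where
  "Lop P x = (\<chi> i. \<Sum>j\<in>UNIV. P$i$j *\<^sub>R x$j)"

definition stack_grad :: "('n::finite \<Rightarrow> real^'d \<Rightarrow> real^'d) \<Rightarrow> real^'d^'n \<Rightarrow> real^'d^'n" where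
  "stack_grad g x = (\<chi> i. g i (x$i))"

text \<open>State (x^k, d^k, q^k) of the algorithm, driven by noises W k = w^k, E k = e^k.\<close>
fun alg_state ::
  "real^'n^'n \<Rightarrow> real \<Rightarrow> real \<Rightarrow> real \<Rightarrow> (nat \<Rightarrow> real) \<Rightarrow> ('n::finite \<Rightarrow> real^'d \<Rightarrow> real^'d)
   \<Rightarrow> real^'d^'n \<Rightarrow> (nat \<Rightarrow> real^'d^'n) \<Rightarrow> (nat \<Rightarrow> real^'d^'n) \<Rightarrow> nat
   \<Rightarrow> (real^'d^'n) \<times> (real^'d^'n) \<times> (real^'d^'n)" where
  "alg_state P \<rho> \<alpha> \<beta> \<eta> g x0 W E 0 = (x0, 0, 0)"
| "alg_state P \<rho> \<alpha> \<beta> \<eta> g x0 W E (Suc k) =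
     (let (x, d, q) = alg_state P \<rho> \<alpha> \<beta> \<eta> g x0 W E k;
          y = x + (1 - \<eta> k) *\<^sub>R d + W k;
          z = stack_grad g x + \<eta> k *\<^sub>R q + \<rho> *\<^sub>R Lop P y + E k
      in (x + W k - \<alpha> *\<^sub>R (z - E k) + \<beta> *\<^sub>R Lop P z,
          \<eta> k *\<^sub>R d + y,
          \<eta> k *\<^sub>R q + \<rho> *\<^sub>R Lop P y))"

text \<open>Transmitted quantities (y^k, z^k) at iteration k.\<close>
definition alg_obs ::
  "real^'n^'n \<Rightarrow> real \<Rightarrow> real \<Rightarrow> real \<Rightarrow> (nat \<Rightarrow> real) \<Rightarrow> ('n::finite \<Rightarrow> real^'d \<Rightarrow> real^'d)
   \<Rightarrow> real^'d^'n \<Rightarrow> (nat \<Rightarrow> real^'d^'n) \<Rightarrow> (nat \<Rightarrow> real^'d^'n) \<Rightarrow> nat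
   \<Rightarrow> (real^'d^'n) \<times> (real^'d^'n)" where
  "alg_obs P \<rho> \<alpha> \<beta> \<eta> g x0 W E k =
     (let (x, d, q) = alg_state P \<rho> \<alpha> \<beta> \<eta> g x0 W E k;
          y = x + (1 - \<eta> k) *\<^sub>R d + W k;
          z = stack_grad g x + \<eta> k *\<^sub>R q + \<rho> *\<^sub>R Lop P y + E k
      in (y, z))"

definition laplace_density :: "real \<Rightarrow> real \<Rightarrow> real" where
  "laplace_density \<theta> t = exp (- \<bar>t\<bar> / \<theta>) / (2 * \<theta>)"

definition noise_density ::
  "('n::finite \<Rightarrow> real) \<Rightarrow> ('n \<Rightarrow> real) \<Rightarrow> ('n \<Rightarrow> real) \<Rightarrow> nat
   \<Rightarrow> (nat \<Rightarrow> real^'d::finite^'n) \<Rightarrow> (nat \<Rightarrow> real^'d^'n) \<Rightarrow> real" where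
  "noise_density r uw ue K W E =
     (\<Prod>k<K. \<Prod>i\<in>UNIV. \<Prod>j\<in>UNIV.
        laplace_density (r i ^ k * uw i) (W k $ i $ j) *
        laplace_density (r i ^ k * ue i) (E k $ i $ j))"

end

theory Submission
  imports Defs
begin

(* Equal observations pin down the memories d^k and q^k of both runs, so matching y^k and z^k
   forces w1^k - w2^k = x2^k - x1^k and e1^k - e2^k = grad f2(x2^k) - grad f1(x1^k), while
   x1^(k+1) - x2^(k+1) = alpha (e1^k - e2^k).  As the gradients differ only at node i0, the two
   trajectories agree off i0, and their deviation at i0 obeys D(k+1) <= alpha (Mbar D(k) + delta),
   so it never exceeds the fixed point alpha delta / (1 - alpha Mbar).  Each Laplace coordinate
   changes the density by a factor at most exp(|shift| / scale), and the l1 norm of a vector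
   in R^d is at most sqrt d times its Euclidean norm. *)

lemma gderiv_unique:
  assumes "GDERIV f x :> D1" and "GDERIV f x :> D2"
  shows "D1 = D2"
proof -
  have "(\<lambda>h. inner h D1) = (\<lambda>h. inner h D2)"
    using assms unfolding gderiv_def by (rule has_derivative_unique)
  then have "inner (D1 - D2) D1 = inner (D1 - D2) D2" by metis
  then have "inner (D1 - D2) (D1 - D2) = 0" by (simp add: inner_diff_right)
  then show ?thesis by simp
qed

lemma lipschitz_const_nonneg:
  fixes f :: "'a::real_normed_vector \<Rightarrow> 'b::real_normed_vector" and a b :: 'a
  assumes "\<And>x y. norm (f x - f y) \<le> L * norm (x - y)" and "a \<noteq> b"
  shows "0 \<le> L"
proof -
  have "0 \<le> L * norm (a - b)" using assms(1)[of a b] norm_ge_zero order_trans by blast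
  moreover have "0 < norm (a - b)" using assms(2) by simp
  ultimately show ?thesis by (simp add: zero_le_mult_iff)
qed

lemma sum_abs_le_sqrt_card_mult_norm:
  fixes v :: "real^'d"
  shows "(\<Sum>j\<in>UNIV. \<bar>v$j\<bar>) \<le> sqrt (real CARD('d)) * norm v"
proof -
  have "(\<Sum>j\<in>UNIV. \<bar>\<bar>v$j\<bar>\<bar> * \<bar>1::real\<bar>) \<le> L2_set (\<lambda>j. \<bar>v$j\<bar>) UNIV * L2_set (\<lambda>_. 1) (UNIV::'d set)"
    by (rule L2_set_mult_ineq)
  then show ?thesis by (simp add: norm_vec_def L2_set_constant mult.commute)
qed

lemma bounded_by_fixpoint_of_affine_recursion:
  fixes u :: "nat \<Rightarrow> real"
  assumes "0 \<le> a" "a < 1" "0 \<le> b" "u 0 \<le> b / (1 - a)"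
    and "\<And>k. k < K \<Longrightarrow> u (Suc k) \<le> a * u k + b"
  shows "k \<le> K \<Longrightarrow> u k \<le> b / (1 - a)"
proof (induction k)
  case 0
  then show ?case using assms(4) by simp
next
  case (Suc k)
  then have "u (Suc k) \<le> a * (b / (1 - a)) + b"
    using assms(1,5) by (meson Suc_le_lessD add_right_mono less_imp_le_nat mult_left_mono order_trans)
  also have "\<dots> = b / (1 - a)" using assms(2) by (simp add: field_simps)
  finally show ?case .
qed

lemma laplace_density_nonneg: "0 < \<theta> \<Longrightarrow> 0 \<le> laplace_density \<theta> t"
  unfolding laplace_density_def by simp

lemma laplace_density_le_exp_mult:
  assumes "0 < \<theta>"
  shows "laplace_density \<theta> a \<le> exp (\<bar>a - b\<bar> / \<theta>) * laplace_density \<theta> b"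
proof -
  have "- \<bar>a\<bar> / \<theta> \<le> \<bar>a - b\<bar> / \<theta> + - \<bar>b\<bar> / \<theta>"
    using assms by (simp add: divide_simps)
  then have "exp (- \<bar>a\<bar> / \<theta>) \<le> exp (\<bar>a - b\<bar> / \<theta>) * exp (- \<bar>b\<bar> / \<theta>)"
    by (simp flip: exp_add)
  then show ?thesis
    using assms unfolding laplace_density_def by (simp add: divide_right_mono)
qed

lemma prod_le_exp_sum_mult_prod:
  fixes f g c :: "'a \<Rightarrow> real"
  assumes "finite A" and "\<And>i. i \<in> A \<Longrightarrow> 0 \<le> f i \<and> f i \<le> exp (c i) * g i"
  shows "prod f A \<le> exp (sum c A) * prod g A"
proof -
  have "prod f A \<le> prod (\<lambda>i. exp (c i) * g i) A" by (rule prod_mono) (use assms in auto)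
  also have "\<dots> = exp (sum c A) * prod g A" using assms(1) by (simp add: prod.distrib exp_sum)
  finally show ?thesis .
qed

lemma noise_density_nonneg:
  assumes "\<And>i. 0 < r i" "\<And>i. 0 < uw i" "\<And>i. 0 < ue i"
  shows "0 \<le> noise_density r uw ue K W E"
  unfolding noise_density_def using assms
  by (intro prod_nonneg mult_nonneg_nonneg laplace_density_nonneg) simp_all

definition privacy_loss ::
  "('n::finite \<Rightarrow> real) \<Rightarrow> ('n \<Rightarrow> real) \<Rightarrow> ('n \<Rightarrow> real) \<Rightarrow> nat
   \<Rightarrow> real^'d::finite^'n \<Rightarrow> real^'d^'n \<Rightarrow> real" where
  "privacy_loss r uw ue k dW dE =
     (\<Sum>i\<in>UNIV. (\<Sum>j\<in>UNIV. \<bar>dW $ i $ j\<bar>) / (r i ^ k * uw i) + (\<Sum>j\<in>UNIV. \<bar>dE $ i $ j\<bar>) / (r i ^ k * ue i))"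

lemma noise_density_le_exp_privacy_loss:
  assumes "\<And>i. 0 < r i" "\<And>i. 0 < uw i" "\<And>i. 0 < ue i"
  shows "noise_density r uw ue K W1 E1 \<le>
           exp (\<Sum>k<K. privacy_loss r uw ue k (W1 k - W2 k) (E1 k - E2 k)) * noise_density r uw ue K W2 E2"
proof -
  have pos: "0 < r i ^ k * uw i" "0 < r i ^ k * ue i" for i k
    using assms by simp_all
  let ?lap = "\<lambda>W E k i j. laplace_density (r i ^ k * uw i) (W k $ i $ j) * laplace_density (r i ^ k * ue i) (E k $ i $ j)"
  have "?lap W1 E1 k i j \<le> exp (\<bar>W1 k $ i $ j - W2 k $ i $ j\<bar> / (r i ^ k * uw i)
                              + \<bar>E1 k $ i $ j - E2 k $ i $ j\<bar> / (r i ^ k * ue i)) * ?lap W2 E2 k i j"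
    for k i j
  proof -
    have "?lap W1 E1 k i j \<le> (exp (\<bar>W1 k $ i $ j - W2 k $ i $ j\<bar> / (r i ^ k * uw i)) * laplace_density (r i ^ k * uw i) (W2 k $ i $ j))
        * (exp (\<bar>E1 k $ i $ j - E2 k $ i $ j\<bar> / (r i ^ k * ue i)) * laplace_density (r i ^ k * ue i) (E2 k $ i $ j))"
      using pos by (intro mult_mono laplace_density_le_exp_mult laplace_density_nonneg mult_nonneg_nonneg) simp_all
    then show ?thesis by (simp add: exp_add mult_ac)
  qed
  then show ?thesis
    unfolding noise_density_def privacy_loss_def sum_divide_distrib sum.distrib[symmetric]
    using pos by (intro prod_le_exp_sum_mult_prod conjI prod_nonneg mult_nonneg_nonneg laplace_density_nonneg ballI) simp_all
qed

lemma privacy_loss_at_single_node_le: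
  fixes dW dE :: "real^'d::finite^'n::finite"
  assumes "\<And>i. i \<noteq> i0 \<Longrightarrow> dW $ i = 0" "\<And>i. i \<noteq> i0 \<Longrightarrow> dE $ i = 0"
    and "norm (dW $ i0) \<le> a" "norm (dE $ i0) \<le> b"
    and "0 < r i0" "0 < uw i0" "0 < ue i0"
  shows "privacy_loss r uw ue k dW dE \<le> sqrt (real CARD('d)) * (a / uw i0 + b / ue i0) / r i0 ^ k"
proof -
  have "privacy_loss r uw ue k dW dE
      = (\<Sum>j\<in>UNIV. \<bar>dW $ i0 $ j\<bar>) / (r i0 ^ k * uw i0) + (\<Sum>j\<in>UNIV. \<bar>dE $ i0 $ j\<bar>) / (r i0 ^ k * ue i0)"
    unfolding privacy_loss_def using assms(1,2) by (subst sum.remove[of _ i0]) auto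
  also have "\<dots> \<le> sqrt (real CARD('d)) * a / (r i0 ^ k * uw i0) + sqrt (real CARD('d)) * b / (r i0 ^ k * ue i0)"
    using assms(3-) sum_abs_le_sqrt_card_mult_norm[of "dW $ i0"] sum_abs_le_sqrt_card_mult_norm[of "dE $ i0"]
    by (intro add_mono divide_right_mono) (auto intro: order_trans mult_left_mono)
  also have "\<dots> = sqrt (real CARD('d)) * (a / uw i0 + b / ue i0) / r i0 ^ k"
    using assms(5-) by (simp add: field_simps)
  finally show ?thesis .
qed

lemma alg_memory_eq_if_obs_eq:
  assumes "\<forall>k<K. alg_obs P \<rho> \<alpha> \<beta> \<eta> g1 x0 W1 E1 k = alg_obs P \<rho> \<alpha> \<beta> \<eta> g2 x0 W2 E2 k"
  shows "k \<le> K \<Longrightarrow> snd (alg_state P \<rho> \<alpha> \<beta> \<eta> g1 x0 W1 E1 k) = snd (alg_state P \<rho> \<alpha> \<beta> \<eta> g2 x0 W2 E2 k)"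
proof (induction k)
  case 0
  then show ?case by simp
next
  case (Suc k)
  obtain x1 d1 q1 where s1: "alg_state P \<rho> \<alpha> \<beta> \<eta> g1 x0 W1 E1 k = (x1, d1, q1)" by (cases rule: prod_cases3)
  obtain x2 d2 q2 where s2: "alg_state P \<rho> \<alpha> \<beta> \<eta> g2 x0 W2 E2 k = (x2, d2, q2)" by (cases rule: prod_cases3)
  define y1 where "y1 = x1 + (1 - \<eta> k) *\<^sub>R d1 + W1 k"
  define y2 where "y2 = x2 + (1 - \<eta> k) *\<^sub>R d2 + W2 k"
  have "alg_obs P \<rho> \<alpha> \<beta> \<eta> g1 x0 W1 E1 k = alg_obs P \<rho> \<alpha> \<beta> \<eta> g2 x0 W2 E2 k"
    using assms Suc.prems by simp
  then have "y1 = y2"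
    using s1 s2 unfolding y1_def y2_def by (simp add: alg_obs_def Let_def)
  moreover have "d1 = d2" "q1 = q2" using Suc s1 s2 by auto
  moreover have "snd (alg_state P \<rho> \<alpha> \<beta> \<eta> g1 x0 W1 E1 (Suc k)) = (\<eta> k *\<^sub>R d1 + y1, \<eta> k *\<^sub>R q1 + \<rho> *\<^sub>R Lop P y1)"
    using s1 by (simp add: y1_def Let_def)
  moreover have "snd (alg_state P \<rho> \<alpha> \<beta> \<eta> g2 x0 W2 E2 (Suc k)) = (\<eta> k *\<^sub>R d2 + y2, \<eta> k *\<^sub>R q2 + \<rho> *\<^sub>R Lop P y2)"
    using s2 by (simp add: y2_def Let_def)
  ultimately show ?case by simp
qed

lemma alg_noise_diff_if_obs_eq:
  assumes "\<forall>k<K. alg_obs P \<rho> \<alpha> \<beta> \<eta> g1 x0 W1 E1 k = alg_obs P \<rho> \<alpha> \<beta> \<eta> g2 x0 W2 E2 k" and "k < K"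
  defines "X1 \<equiv> \<lambda>k. fst (alg_state P \<rho> \<alpha> \<beta> \<eta> g1 x0 W1 E1 k)"
    and "X2 \<equiv> \<lambda>k. fst (alg_state P \<rho> \<alpha> \<beta> \<eta> g2 x0 W2 E2 k)"
  shows "W1 k - W2 k = X2 k - X1 k"
    and "E1 k - E2 k = stack_grad g2 (X2 k) - stack_grad g1 (X1 k)"
    and "X1 (Suc k) - X2 (Suc k) = \<alpha> *\<^sub>R (E1 k - E2 k)"
proof -
  obtain x1 d q where s1: "alg_state P \<rho> \<alpha> \<beta> \<eta> g1 x0 W1 E1 k = (x1, d, q)" by (cases rule: prod_cases3)
  moreover have "snd (alg_state P \<rho> \<alpha> \<beta> \<eta> g2 x0 W2 E2 k) = (d, q)"
    using alg_memory_eq_if_obs_eq[OF assms(1), of k] assms(2) s1 by simp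
  then obtain x2 where s2: "alg_state P \<rho> \<alpha> \<beta> \<eta> g2 x0 W2 E2 k = (x2, d, q)"
    by (metis prod.collapse)
  define y1 where "y1 = x1 + (1 - \<eta> k) *\<^sub>R d + W1 k"
  define y2 where "y2 = x2 + (1 - \<eta> k) *\<^sub>R d + W2 k"
  define z1 where "z1 = stack_grad g1 x1 + \<eta> k *\<^sub>R q + \<rho> *\<^sub>R Lop P y1 + E1 k"
  define z2 where "z2 = stack_grad g2 x2 + \<eta> k *\<^sub>R q + \<rho> *\<^sub>R Lop P y2 + E2 k"
  have "alg_obs P \<rho> \<alpha> \<beta> \<eta> g1 x0 W1 E1 k = (y1, z1)"
    using s1 unfolding y1_def z1_def by (simp add: alg_obs_def Let_def)
  moreover have "alg_obs P \<rho> \<alpha> \<beta> \<eta> g2 x0 W2 E2 k = (y2, z2)"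
    using s2 unfolding y2_def z2_def by (simp add: alg_obs_def Let_def)
  ultimately have "(y1, z1) = (y2, z2)" using assms(1,2) by simp
  then have y: "y1 = y2" and z: "z1 = z2" by simp_all
  show "W1 k - W2 k = X2 k - X1 k"
    using y s1 s2 unfolding X1_def X2_def y1_def y2_def by (simp add: algebra_simps)
  have "stack_grad g1 x1 + \<eta> k *\<^sub>R q + \<rho> *\<^sub>R Lop P y1 + E1 k = stack_grad g2 x2 + \<eta> k *\<^sub>R q + \<rho> *\<^sub>R Lop P y1 + E2 k"
    using z y unfolding z1_def z2_def by simp
  then show "E1 k - E2 k = stack_grad g2 (X2 k) - stack_grad g1 (X1 k)"
    using s1 s2 unfolding X1_def X2_def by (simp add: algebra_simps)
  have X1_Suc: "X1 (Suc k) = x1 + W1 k - \<alpha> *\<^sub>R (z1 - E1 k) + \<beta> *\<^sub>R Lop P z1"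
    using s1 unfolding X1_def y1_def z1_def by (simp add: Let_def)
  have X2_Suc: "X2 (Suc k) = x2 + W2 k - \<alpha> *\<^sub>R (z1 - E2 k) + \<beta> *\<^sub>R Lop P z1"
    using s2 z unfolding X2_def y2_def z2_def by (simp add: Let_def)
  have "X1 (Suc k) - X2 (Suc k) = (x1 + W1 k) - (x2 + W2 k) + \<alpha> *\<^sub>R (E1 k - E2 k)"
    unfolding X1_Suc X2_Suc by (simp add: algebra_simps)
  also have "x1 + W1 k = x2 + W2 k" using y unfolding y1_def y2_def by (simp add: algebra_simps)
  finally show "X1 (Suc k) - X2 (Suc k) = \<alpha> *\<^sub>R (E1 k - E2 k)" by simp
qed

lemma deviation_vanishes_off_node:
  fixes X1 X2 :: "nat \<Rightarrow> real^'d::finite^'n::finite"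
  assumes "X1 0 = X2 0"
    and "\<And>k. k < K \<Longrightarrow> X1 (Suc k) - X2 (Suc k) = \<alpha> *\<^sub>R (stack_grad g2 (X2 k) - stack_grad g1 (X1 k))"
    and "g1 i = g2 i"
  shows "k \<le> K \<Longrightarrow> X1 k $ i = X2 k $ i"
proof (induction k)
  case 0
  then show ?case using assms(1) by simp
next
  case (Suc k)
  then have "(X1 (Suc k) - X2 (Suc k)) $ i = 0"
    using assms(2)[of k] assms(3) by (simp add: stack_grad_def)
  then show ?case by simp
qed

lemma deviation_at_node_le:
  fixes X1 X2 :: "nat \<Rightarrow> real^'d::finite^'n::finite"
  assumes "X1 0 = X2 0"
    and "\<And>k. k < K \<Longrightarrow> X1 (Suc k) - X2 (Suc k) = \<alpha> *\<^sub>R (stack_grad g2 (X2 k) - stack_grad g1 (X1 k))"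
    and "0 < \<alpha>" "0 \<le> L" "\<alpha> * L < 1"
    and lipschitz: "\<And>x y. norm (g1 i x - g1 i y) \<le> L * norm (x - y)"
    and close: "\<And>x. norm (g1 i x - g2 i x) \<le> \<delta>"
  shows "k \<le> K \<Longrightarrow> norm (X1 k $ i - X2 k $ i) \<le> \<alpha> * \<delta> / (1 - \<alpha> * L)"
proof (rule bounded_by_fixpoint_of_affine_recursion[where u = "\<lambda>k. norm (X1 k $ i - X2 k $ i)"])
  show "0 \<le> \<alpha> * \<delta>"
    using assms(3) close[of 0] norm_ge_zero order_trans by (metis less_imp_le mult_nonneg_nonneg)
  show "norm (X1 0 $ i - X2 0 $ i) \<le> \<alpha> * \<delta> / (1 - \<alpha> * L)"
    using assms(1) \<open>0 \<le> \<alpha> * \<delta>\<close> \<open>\<alpha> * L < 1\<close> by simp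
  fix k assume "k < K"
  have "X1 (Suc k) $ i - X2 (Suc k) $ i = \<alpha> *\<^sub>R (g2 i (X2 k $ i) - g1 i (X1 k $ i))"
    using arg_cong[OF assms(2)[OF \<open>k < K\<close>], of "\<lambda>v. v $ i"] by (simp add: stack_grad_def)
  then have "norm (X1 (Suc k) $ i - X2 (Suc k) $ i) = \<alpha> * norm (g1 i (X1 k $ i) - g2 i (X2 k $ i))"
    using assms(3) by (simp add: norm_minus_commute)
  also have "norm (g1 i (X1 k $ i) - g2 i (X2 k $ i))
      \<le> norm (g1 i (X1 k $ i) - g1 i (X2 k $ i)) + norm (g1 i (X2 k $ i) - g2 i (X2 k $ i))"
    by (rule norm_diff_triangle_le[of _ "g1 i (X2 k $ i)"]) simp_all
  also have "\<dots> \<le> L * norm (X1 k $ i - X2 k $ i) + \<delta>"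
    using lipschitz close by (rule add_mono)
  finally show "norm (X1 (Suc k) $ i - X2 (Suc k) $ i) \<le> \<alpha> * L * norm (X1 k $ i - X2 k $ i) + \<alpha> * \<delta>"
    using assms(3) by (simp add: algebra_simps)
qed (use assms in \<open>simp_all add: zero_le_mult_iff\<close>)

lemma alg_privacy_loss_le_if_obs_eq:
  fixes g1 g2 :: "'n::finite \<Rightarrow> real^'d::finite \<Rightarrow> real^'d"
  assumes obs: "\<forall>k<K. alg_obs P \<rho> \<alpha> \<beta> \<eta> g1 x0 W1 E1 k = alg_obs P \<rho> \<alpha> \<beta> \<eta> g2 x0 W2 E2 k"
    and "k < K"
    and same: "\<And>i. i \<noteq> i0 \<Longrightarrow> g1 i = g2 i"
    and "0 < \<alpha>" "0 \<le> L" "\<alpha> * L < 1"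
    and "\<And>x y. norm (g1 i0 x - g1 i0 y) \<le> L * norm (x - y)"
    and "\<And>x. norm (g1 i0 x - g2 i0 x) \<le> \<delta>"
    and "0 < r i0" "0 < uw i0" "0 < ue i0"
  shows "privacy_loss r uw ue k (W1 k - W2 k) (E1 k - E2 k)
           \<le> sqrt (real CARD('d)) * (1 / (\<alpha> * ue i0) + 1 / uw i0) * (\<alpha> * \<delta> / (r i0 ^ k * (1 - \<alpha> * L)))"
proof -
  define X1 where "X1 k = fst (alg_state P \<rho> \<alpha> \<beta> \<eta> g1 x0 W1 E1 k)" for k
  define X2 where "X2 k = fst (alg_state P \<rho> \<alpha> \<beta> \<eta> g2 x0 W2 E2 k)" for k
  define B where "B = \<alpha> * \<delta> / (1 - \<alpha> * L)"
  note diff = alg_noise_diff_if_obs_eq[OF obs, folded X1_def X2_def]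
  have init: "X1 0 = X2 0" by (simp add: X1_def X2_def)
  have rec: "X1 (Suc k) - X2 (Suc k) = \<alpha> *\<^sub>R (stack_grad g2 (X2 k) - stack_grad g1 (X1 k))" if "k < K" for k
    using diff[OF that] by simp
  have off: "X1 k $ i = X2 k $ i" if "k \<le> K" "i \<noteq> i0" for k i
    using deviation_vanishes_off_node[OF init rec same] that by blast
  have at: "norm (X1 k $ i0 - X2 k $ i0) \<le> B" if "k \<le> K" for k
    unfolding B_def using deviation_at_node_le[OF init rec assms(4-8)] that by blast
  have E_diff: "E1 k - E2 k = (1 / \<alpha>) *\<^sub>R (X1 (Suc k) - X2 (Suc k))"
    using diff(3)[OF \<open>k < K\<close>] \<open>0 < \<alpha>\<close> by simp
  have "privacy_loss r uw ue k (W1 k - W2 k) (E1 k - E2 k)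
      \<le> sqrt (real CARD('d)) * (B / uw i0 + B / \<alpha> / ue i0) / r i0 ^ k"
  proof (rule privacy_loss_at_single_node_le)
    show "(W1 k - W2 k) $ i = 0" "(E1 k - E2 k) $ i = 0" if "i \<noteq> i0" for i
      using off[of k i] off[of "Suc k" i] that \<open>k < K\<close> diff(1)[OF \<open>k < K\<close>] E_diff by simp_all
    show "norm ((W1 k - W2 k) $ i0) \<le> B"
      using at[of k] \<open>k < K\<close> diff(1)[OF \<open>k < K\<close>] by (simp add: norm_minus_commute)
    show "norm ((E1 k - E2 k) $ i0) \<le> B / \<alpha>"
      using at[of "Suc k"] \<open>k < K\<close> E_diff \<open>0 < \<alpha>\<close> by (simp add: divide_right_mono)
  qed (use assms in auto)
  also have "\<dots> = sqrt (real CARD('d)) * (1 / (\<alpha> * ue i0) + 1 / uw i0) * (B / r i0 ^ k)"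
    using assms(4,9-) by (simp add: field_simps)
  also have "B / r i0 ^ k = \<alpha> * \<delta> / (r i0 ^ k * (1 - \<alpha> * L))"
    by (simp add: B_def)
  finally show ?thesis .
qed

theorem theorem3:
  fixes Eg :: "('n::finite \<times> 'n) set"
    and P :: "real^'n^'n"
    and f1 f2 :: "'n \<Rightarrow> real^'d::finite \<Rightarrow> real"
    and g1 g2 :: "'n \<Rightarrow> real^'d \<Rightarrow> real^'d"
    and M :: "'n \<Rightarrow> real"
    and \<rho> \<alpha> \<beta> \<delta> \<epsilon> :: real
    and \<eta> :: "nat \<Rightarrow> real"
    and r ue uw :: "'n \<Rightarrow> real"
    and x0 :: "real^'d^'n"
    and K :: nat
    and i0 :: 'n
  assumes graph: "connected_undirected_graph Eg"
    and P: "graph_compatible_psd Eg P"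
    and A3: "{x::real^'d^'n. Lop P x = 0} = {x. \<forall>i j. x$i = x$j}"
    and params: "\<rho> > 0" "\<alpha> > 0" "\<beta> > 0"
    and eta: "\<And>k. 0 < \<eta> k \<and> \<eta> k < 1"
    and r: "\<And>i. 0 < r i \<and> r i < 1"
    and u: "\<And>i. ue i > 0" "\<And>i. uw i > 0"
    and grad1: "\<And>i x. GDERIV (f1 i) x :> g1 i x"
    and grad2: "\<And>i x. GDERIV (f2 i) x :> g2 i x"
    and A1_1: "\<And>i x y. norm (g1 i x - g1 i y) \<le> M i * norm (x - y)"
    and A1_2: "\<And>i x y. norm (g2 i x - g2 i y) \<le> M i * norm (x - y)"
    and A2_1: "bdd_below (range (\<lambda>x. \<Sum>i\<in>UNIV. f1 i x))"
    and A2_2: "bdd_below (range (\<lambda>x. \<Sum>i\<in>UNIV. f2 i x))"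
    and delta: "\<delta> > 0"
    and adj_same: "\<And>i. i \<noteq> i0 \<Longrightarrow> f1 i = f2 i"
    and adj_close: "\<And>x. norm (g1 i0 x - g2 i0 x) \<le> \<delta>"
    and step: "\<alpha> * Max (range M) < 1"
    and K: "K > 0"
    and eps: "\<epsilon> > 0"
    and budget: "(\<Sum>k=1..K. sqrt (real CARD('d)) * (1 / (\<alpha> * ue i0) + 1 / uw i0)
                    * (\<alpha> * \<delta> / (r i0 ^ k * (1 - \<alpha> * Max (range M))))) \<le> \<epsilon>"
  shows "\<forall>W1 E1 W2 E2.
           (\<forall>k<K. alg_obs P \<rho> \<alpha> \<beta> \<eta> g1 x0 W1 E1 k = alg_obs P \<rho> \<alpha> \<beta> \<eta> g2 x0 W2 E2 k)
           \<longrightarrow> noise_density r uw ue K W1 E1 \<le> exp \<epsilon> * noise_density r uw ue K W2 E2"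
proof (intro allI impI)
  fix W1 E1 W2 E2 :: "nat \<Rightarrow> real^'d^'n"
  assume obs: "\<forall>k<K. alg_obs P \<rho> \<alpha> \<beta> \<eta> g1 x0 W1 E1 k = alg_obs P \<rho> \<alpha> \<beta> \<eta> g2 x0 W2 E2 k"
  define Mb where "Mb = Max (range M)"
  define F where "F k = sqrt (real CARD('d)) * (1 / (\<alpha> * ue i0) + 1 / uw i0)
                         * (\<alpha> * \<delta> / (r i0 ^ k * (1 - \<alpha> * Mb)))" for k
  have same: "g1 i = g2 i" if "i \<noteq> i0" for i
    by (intro ext gderiv_unique[OF grad1]) (simp add: adj_same[OF that] grad2)
  have "0 \<le> M i0"
    using A1_1[of i0] by (rule lipschitz_const_nonneg[of _ _ 1 0]) simp
  moreover have "M i0 \<le> Mb" unfolding Mb_def by (rule Max_ge) auto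
  ultimately have Mb: "0 \<le> Mb" and lipschitz: "norm (g1 i0 x - g1 i0 y) \<le> Mb * norm (x - y)" for x y
    using A1_1[of i0 x y] by (linarith, meson order_trans mult_right_mono norm_ge_zero)
  have "privacy_loss r uw ue k (W1 k - W2 k) (E1 k - E2 k) \<le> F (Suc k)" if "k < K" for k
  proof -
    have "privacy_loss r uw ue k (W1 k - W2 k) (E1 k - E2 k) \<le> F k"
      unfolding F_def using alg_privacy_loss_le_if_obs_eq[OF obs that same params(2) Mb] step lipschitz adj_close r u
      by (simp add: Mb_def)
    also have "F k \<le> F (Suc k)" \<comment> \<open>the budget charges iteration k to its summand k + 1\<close>
      unfolding F_def using params delta u(1)[of i0] u(2)[of i0] r[of i0] step
      by (intro mult_left_mono divide_left_mono mult_right_mono) (auto simp: Mb_def power_Suc_le_self)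
    finally show ?thesis .
  qed
  then have "(\<Sum>k<K. privacy_loss r uw ue k (W1 k - W2 k) (E1 k - E2 k)) \<le> (\<Sum>k<K. F (Suc k))"
    by (intro sum_mono) simp
  also have "\<dots> \<le> \<epsilon>"
    using budget by (simp add: F_def Mb_def sum.atLeast1_atMost_eq)
  finally have loss: "(\<Sum>k<K. privacy_loss r uw ue k (W1 k - W2 k) (E1 k - E2 k)) \<le> \<epsilon>" .
  have "noise_density r uw ue K W1 E1
      \<le> exp (\<Sum>k<K. privacy_loss r uw ue k (W1 k - W2 k) (E1 k - E2 k)) * noise_density r uw ue K W2 E2"
    using r u by (intro noise_density_le_exp_privacy_loss) auto
  also have "\<dots> \<le> exp \<epsilon> * noise_density r uw ue K W2 E2"
    using loss r u by (intro mult_right_mono noise_density_nonneg) auto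
  finally show "noise_density r uw ue K W1 E1 \<le> exp \<epsilon> * noise_density r uw ue K W2 E2" .
qed

end
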